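(* Let $\phi:\mathbb{R}\to\mathbb{R}$ be smooth with $\phi(x)\to0$ as $|x|\to\infty$. Suppose $f_+,f_-$ are equilibrium solutions of $u_t=u_{xx}-u^2+\phi(x)$ (i.e. $0=f_\pm''-f_\pm^2+\phi$) which are smooth and bounded with bounded first and second derivatives, are asymptotic to $6/x^2$ for large $x$ (so lie in $L^1(\mathbb{R})$), satisfy $f_+(x)>f_-(x)$ for all $x$, and such that there is no equilibrium $f_2$ with $f_+(x)>f_2(x)>f_-(x)$ for all $x$. Suppose further that $(g_c,\phi_c)_{c\in[0,1)}$ is a family with $0=g_c''-g_c^2+\phi_c$, $g_0=f_-$, $\phi_0=\phi$, and $\phi_a(x)<\phi_b(x)$, $g_a(x)>g_b(x)$ for all $x$ whenever $a>b$. For $c\in[0,1)$ let $$W_c=\{v\in C^2(\mathbb{R}) : g_c(x)<v(x)<f_+(x)\text{ for all }x\}.$$ Let $U\in W_c$ have bounded first and second derivatives, and let $u$ solve the Cauchy problem $$\frac{\partial u}{\partial t}=\frac{\partial^2 u}{\partial x^2}-u^2+\phi(x),\qquad u(0,x)=U(x).$$ Then $u(t,\cdot)\in L^1(\mathbb{R})\cap L^\infty(\mathbb{R})$ for all $t>0$. Additionally, if $c\in(0,1)$, then $u(t,\cdot)$ cannot have $f_-$ as a limit as $t\to\infty$.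
   Context: An equilibrium solution is a time-independent solution of the equation. *)

theory Defs
  imports "HOL-Analysis.Analysis" "HOL-Library.Landau_Symbols"
begin

definition smooth_fun :: "(real \<Rightarrow> real) \<Rightarrow> bool" where
  "smooth_fun f \<longleftrightarrow> (\<forall>n. \<forall>x. ((deriv ^^ n) f) differentiable (at x))"

definition C2_fun :: "(real \<Rightarrow> real) \<Rightarrow> bool" where
  "C2_fun f \<longleftrightarrow> (\<forall>x. f differentiable (at x)) \<and> (\<forall>x. deriv f differentiable (at x))
                 \<and> continuous_on UNIV (deriv (deriv f))"

definition equilibrium :: "(real \<Rightarrow> real) \<Rightarrow> (real \<Rightarrow> real) \<Rightarrow> bool" where
  "equilibrium phi f \<longleftrightarrow> C2_fun f \<and> (\<forall>x. deriv (deriv f) x - (f x)^2 + phi x = 0)"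

text \<open>Classical solution u(t,x) of the Cauchy problem u_t = u_xx - u^2 + phi(x), u(0,x) = U(x),
  for t \<ge> 0, in the standard uniqueness class (bounded on every strip [0,T] x R).\<close>
definition cauchy_solution ::
  "(real \<Rightarrow> real) \<Rightarrow> (real \<Rightarrow> real) \<Rightarrow> (real \<Rightarrow> real \<Rightarrow> real) \<Rightarrow> bool" where
  "cauchy_solution phi U u \<longleftrightarrow>
     u 0 = U \<and>
     continuous_on ({0..} \<times> UNIV) (\<lambda>(t,x). u t x) \<and>
     (\<forall>t>0. \<forall>x. (\<lambda>s. u s x) differentiable (at t)) \<and>
     (\<forall>t>0. \<forall>x. u t differentiable (at x) \<and> deriv (u t) differentiable (at x)) \<and>
     continuous_on ({0<..} \<times> UNIV) (\<lambda>(t,x). deriv (\<lambda>s. u s x) t) \<and>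
     continuous_on ({0<..} \<times> UNIV) (\<lambda>(t,x). deriv (deriv (u t)) x) \<and>
     (\<forall>t>0. \<forall>x. deriv (\<lambda>s. u s x) t = deriv (deriv (u t)) x - (u t x)^2 + phi x) \<and>
     (\<forall>T\<ge>0. bounded ((\<lambda>(t,x). u t x) ` ({0..T} \<times> UNIV)))"

end

(* The weak maximum principle for supersolutions of w_t = w_xx - a w with bounded a, applied to
   u - g_c (g_c is a subsolution because phi_c \<le> phi) and to f_+ - u, traps the solution:
   g_c \<le> u(t,.) \<le> f_+ for all t \<ge> 0.  Since f_- \<le> g_c, the slice u(t,.) is dominated by
   |f_+| + |f_-|, which is integrable because both equilibria are bounded and decay like 6/x^2.
   For c > 0 the lower barrier g_c lies strictly above f_-, so u(t,x) cannot tend to f_-(x). *)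

theory Submission
  imports Defs "HOL-Probability.Sinc_Integral"
begin

lemma second_deriv_nonneg_at_min:
  fixes f f' :: "real \<Rightarrow> real"
  assumes f': "\<And>x. (f has_real_derivative f' x) (at x)"
    and f'': "(f' has_real_derivative D) (at x0)"
    and min: "\<And>x. f x0 \<le> f x"
  shows "D \<ge> 0"
proof (rule ccontr)
  assume "\<not> D \<ge> 0"
  then obtain d where "d > 0" and dec: "\<And>h. 0 < h \<Longrightarrow> h < d \<Longrightarrow> f' (x0 + h) < f' x0"
    using DERIV_neg_dec_right[OF f''] by force
  have "f' x0 = 0"
    using DERIV_local_min[OF f'[of x0], of 1] min by auto
  obtain z where z: "x0 < z" "z < x0 + d / 2" and mvt: "f (x0 + d / 2) - f x0 = d / 2 * f' z"
    using MVT2[of x0 "x0 + d / 2" f f'] f' \<open>d > 0\<close> by auto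
  have "f' z < 0"
    using dec[of "z - x0"] z \<open>f' x0 = 0\<close> by auto
  with \<open>d > 0\<close> have "d / 2 * f' z < 0"
    by (simp add: mult_pos_neg)
  with mvt have "f (x0 + d / 2) < f x0"
    by linarith
  with min show False
    by (simp add: not_le[symmetric])
qed

lemma deriv_nonpos_at_left_min:
  fixes f :: "real \<Rightarrow> real"
  assumes "(f has_real_derivative D) (at t0)" and "a < t0"
    and min: "\<And>s. s \<in> {a..t0} \<Longrightarrow> f t0 \<le> f s"
  shows "D \<le> 0"
proof (rule ccontr)
  assume "\<not> D \<le> 0"
  then obtain d where "d > 0" and inc: "\<And>h. 0 < h \<Longrightarrow> h < d \<Longrightarrow> f (t0 - h) < f t0"
    using DERIV_pos_inc_left[OF assms(1)] by force
  define h where "h = min (d / 2) (t0 - a)"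
  have "0 < h" "h < d" "t0 - h \<in> {a..t0}"
    using \<open>d > 0\<close> \<open>a < t0\<close> by (auto simp: h_def)
  with inc min show False
    by (meson not_le)
qed

lemma continuous_on_strip_attains_min:
  fixes y :: "real \<Rightarrow> real \<Rightarrow> real"
  assumes cont: "continuous_on ({a..b} \<times> UNIV) (\<lambda>p. y (fst p) (snd p))"
    and t1: "t1 \<in> {a..b}"
    and far: "\<And>t x. t \<in> {a..b} \<Longrightarrow> R \<le> \<bar>x\<bar> \<Longrightarrow> y t1 x1 \<le> y t x"
  obtains t0 x0 where "t0 \<in> {a..b}" and "\<And>t x. t \<in> {a..b} \<Longrightarrow> y t0 x0 \<le> y t x"
proof -
  define S where "S = {a..b} \<times> {- max R \<bar>x1\<bar> .. max R \<bar>x1\<bar>}"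
  have "compact S" "(t1, x1) \<in> S"
    using t1 by (auto simp: S_def intro!: compact_Times)
  moreover have "continuous_on S (\<lambda>p. y (fst p) (snd p))"
    by (rule continuous_on_subset[OF cont]) (auto simp: S_def)
  ultimately obtain p0 where p0: "p0 \<in> S" and min: "\<And>q. q \<in> S \<Longrightarrow> y (fst p0) (snd p0) \<le> y (fst q) (snd q)"
    using continuous_attains_inf[of S "\<lambda>p. y (fst p) (snd p)"] by blast
  show thesis
  proof (rule that[of "fst p0" "snd p0"])
    show "fst p0 \<in> {a..b}"
      using p0 by (auto simp: S_def)
    show "y (fst p0) (snd p0) \<le> y t x" if "t \<in> {a..b}" for t x
    proof (cases "\<bar>x\<bar> \<le> max R \<bar>x1\<bar>")
      case True
      then show ?thesis
        using min[of "(t, x)"] that by (auto simp: S_def abs_le_iff)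
    next
      case False
      then show ?thesis
        using min[OF \<open>(t1, x1) \<in> S\<close>] far[OF that, of x] by fastforce
    qed
  qed
qed

lemma parabolic_min_principle_nonneg_coeff:
  fixes w wt wx wxx c :: "real \<Rightarrow> real \<Rightarrow> real" and T B :: real
  assumes cont: "continuous_on ({0..T} \<times> UNIV) (\<lambda>p. w (fst p) (snd p))"
    and bnd: "\<And>t x. t \<in> {0..T} \<Longrightarrow> \<bar>w t x\<bar> \<le> B"
    and init: "\<And>x. w 0 x \<ge> 0"
    and dt: "\<And>t x. t \<in> {0<..T} \<Longrightarrow> ((\<lambda>s. w s x) has_real_derivative wt t x) (at t)"
    and dx: "\<And>t x. t \<in> {0<..T} \<Longrightarrow> (w t has_real_derivative wx t x) (at x)"
    and dxx: "\<And>t x. t \<in> {0<..T} \<Longrightarrow> (wx t has_real_derivative wxx t x) (at x)"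
    and supersol: "\<And>t x. t \<in> {0<..T} \<Longrightarrow> wt t x \<ge> wxx t x - c t x * w t x"
    and c_nonneg: "\<And>t x. t \<in> {0<..T} \<Longrightarrow> c t x \<ge> 0"
    and t1: "t1 \<in> {0..T}"
  shows "w t1 x1 \<ge> 0"
proof (rule ccontr)
  assume neg: "\<not> w t1 x1 \<ge> 0"
  have pos1: "1 + x1^2 + 3 * t1 > 0"
    using t1 by (simp add: add_pos_nonneg)
  define e where "e = - w t1 x1 / (2 * (1 + x1^2 + 3 * t1))"
  have e: "e > 0"
    using neg pos1 unfolding e_def by (intro divide_pos_pos) auto
  \<comment> \<open>The penalty confines the minimum of \<open>y\<close> to a compact set and makes \<open>y\<close> a strict
    supersolution: \<open>y\<^sub>t - y\<^sub>x\<^sub>x \<ge> e - c w\<close>.\<close>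
  define y where "y t x = w t x + e * (1 + x^2 + 3 * t)" for t x
  have "y t1 x1 = w t1 x1 / 2"
    using pos1 by (simp add: y_def e_def field_simps)
  with neg have y1: "y t1 x1 < 0"
    by simp
  have "B \<ge> 0"
    using bnd[OF t1, of x1] by linarith
  have far: "y t1 x1 \<le> y t x" if "t \<in> {0..T}" "sqrt (B / e) \<le> \<bar>x\<bar>" for t x
  proof -
    have "B / e = (sqrt (B / e))^2"
      using \<open>B \<ge> 0\<close> e by simp
    also have "\<dots> \<le> x^2"
      using power_mono[OF that(2), of 2] \<open>B \<ge> 0\<close> e by simp
    finally have "B / e \<le> x^2" .
    then have "B \<le> e * x^2"
      using e by (simp add: divide_le_eq mult.commute)
    moreover have "- B \<le> w t x" and "0 \<le> e * (3 * t)"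
      using bnd[OF that(1), of x] that(1) e by auto
    ultimately show ?thesis
      using y1 e by (simp add: y_def algebra_simps)
  qed
  have cont_y: "continuous_on ({0..T} \<times> UNIV) (\<lambda>p. y (fst p) (snd p))"
    unfolding y_def by (intro continuous_intros cont)
  obtain t0 x0 where t0: "t0 \<in> {0..T}" and min: "\<And>t x. t \<in> {0..T} \<Longrightarrow> y t0 x0 \<le> y t x"
    using continuous_on_strip_attains_min[OF cont_y t1 far] by blast
  have "y t0 x0 < 0"
    using min[OF t1, of x1] y1 by linarith
  moreover have "y 0 x > 0" for x
    using init[of x] e by (simp add: y_def add_nonneg_pos add_pos_nonneg)
  ultimately have t0_pos: "t0 \<in> {0<..T}"
    using t0 by (cases "t0 = 0") (auto dest: order.asym)
  have "e * (1 + x0^2 + 3 * t0) > 0"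
    using e t0 by (simp add: add_pos_nonneg)
  with \<open>y t0 x0 < 0\<close> have "w t0 x0 < 0"
    by (simp add: y_def)
  have "wxx t0 x0 + e * 2 \<ge> 0"
  proof (rule second_deriv_nonneg_at_min[where f = "y t0"])
    show "(y t0 has_real_derivative wx t0 x + e * (2 * x)) (at x)" for x
      unfolding y_def by (auto intro!: derivative_eq_intros dx[OF t0_pos])
    show "((\<lambda>x. wx t0 x + e * (2 * x)) has_real_derivative wxx t0 x0 + e * 2) (at x0)"
      by (auto intro!: derivative_eq_intros dxx[OF t0_pos])
    show "y t0 x0 \<le> y t0 x" for x
      using min[OF t0] .
  qed
  moreover have "wt t0 x0 + e * 3 \<le> 0"
  proof (rule deriv_nonpos_at_left_min[where f = "\<lambda>s. y s x0" and a = 0])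
    show "((\<lambda>s. y s x0) has_real_derivative wt t0 x0 + e * 3) (at t0)"
      unfolding y_def by (auto intro!: derivative_eq_intros dt[OF t0_pos])
    show "y t0 x0 \<le> y s x0" if "s \<in> {0..t0}" for s
      using min[of s] that t0 by auto
  qed (use t0_pos in auto)
  moreover have "c t0 x0 * w t0 x0 \<le> 0"
    using c_nonneg[OF t0_pos, of x0] \<open>w t0 x0 < 0\<close> by (simp add: mult_nonneg_nonpos)
  ultimately show False
    using supersol[OF t0_pos, of x0] e by linarith
qed

lemma parabolic_min_principle:
  fixes w wt wx wxx a :: "real \<Rightarrow> real \<Rightarrow> real" and T B K :: real
  assumes cont: "continuous_on ({0..T} \<times> UNIV) (\<lambda>p. w (fst p) (snd p))"
    and bnd: "\<And>t x. t \<in> {0..T} \<Longrightarrow> \<bar>w t x\<bar> \<le> B"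
    and init: "\<And>x. w 0 x \<ge> 0"
    and dt: "\<And>t x. t \<in> {0<..T} \<Longrightarrow> ((\<lambda>s. w s x) has_real_derivative wt t x) (at t)"
    and dx: "\<And>t x. t \<in> {0<..T} \<Longrightarrow> (w t has_real_derivative wx t x) (at x)"
    and dxx: "\<And>t x. t \<in> {0<..T} \<Longrightarrow> (wx t has_real_derivative wxx t x) (at x)"
    and supersol: "\<And>t x. t \<in> {0<..T} \<Longrightarrow> wt t x \<ge> wxx t x - a t x * w t x"
    and a_bnd: "\<And>t x. t \<in> {0<..T} \<Longrightarrow> \<bar>a t x\<bar> \<le> K"
    and t1: "t1 \<in> {0..T}"
  shows "w t1 x1 \<ge> 0"
proof -
  \<comment> \<open>The substitution \<open>v = exp (- \<bar>K\<bar> t) w\<close> makes the zeroth-order coefficient nonnegative.\<close>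
  define l where "l = \<bar>K\<bar>"
  have "exp (- l * t1) * w t1 x1 \<ge> 0"
  proof (rule parabolic_min_principle_nonneg_coeff[where w = "\<lambda>t x. exp (- l * t) * w t x"
        and wt = "\<lambda>t x. exp (- l * t) * (wt t x - l * w t x)"
        and wx = "\<lambda>t x. exp (- l * t) * wx t x" and wxx = "\<lambda>t x. exp (- l * t) * wxx t x"
        and c = "\<lambda>t x. a t x + l" and B = B])
    show "continuous_on ({0..T} \<times> UNIV) (\<lambda>p. exp (- l * fst p) * w (fst p) (snd p))"
      by (intro continuous_intros cont)
    show "\<bar>exp (- l * t) * w t x\<bar> \<le> B" if "t \<in> {0..T}" for t x
    proof -
      have "exp (- l * t) \<le> 1"
        using that by (simp add: l_def)
      then have "exp (- l * t) * \<bar>w t x\<bar> \<le> 1 * B"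
        using bnd[OF that] by (intro mult_mono) auto
      then show ?thesis
        by (simp add: abs_mult)
    qed
    show "((\<lambda>s. exp (- l * s) * w s x) has_real_derivative exp (- l * t) * (wt t x - l * w t x)) (at t)"
      if "t \<in> {0<..T}" for t x
      by (auto intro!: derivative_eq_intros dt[OF that] simp: algebra_simps)
    show "((\<lambda>x. exp (- l * t) * w t x) has_real_derivative exp (- l * t) * wx t x) (at x)"
      if "t \<in> {0<..T}" for t x
      by (auto intro!: derivative_eq_intros dx[OF that])
    show "((\<lambda>x. exp (- l * t) * wx t x) has_real_derivative exp (- l * t) * wxx t x) (at x)"
      if "t \<in> {0<..T}" for t x
      by (auto intro!: derivative_eq_intros dxx[OF that])
    show "exp (- l * t) * (wt t x - l * w t x)
          \<ge> exp (- l * t) * wxx t x - (a t x + l) * (exp (- l * t) * w t x)"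
      if "t \<in> {0<..T}" for t x
      using mult_left_mono[OF supersol[OF that, of x], of "exp (- l * t)"]
      by (simp add: algebra_simps)
    show "a t x + l \<ge> 0" if "t \<in> {0<..T}" for t x
      using a_bnd[OF that, of x] by (simp add: l_def)
  qed (use init t1 in auto)
  then show ?thesis
    by (simp add: zero_le_mult_iff)
qed

lemma cauchy_solution_continuous:
  assumes "cauchy_solution phi U u"
  shows "continuous_on ({0..T} \<times> UNIV) (\<lambda>p. u (fst p) (snd p))"
proof -
  have "continuous_on ({0..} \<times> UNIV) (\<lambda>p. u (fst p) (snd p))"
    using assms by (simp add: cauchy_solution_def case_prod_beta')
  then show ?thesis
    by (rule continuous_on_subset) auto
qed

lemma cauchy_solution_bounded_on_strip:
  assumes "cauchy_solution phi U u" and "T \<ge> 0"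
  obtains B where "\<And>t x. t \<in> {0..T} \<Longrightarrow> \<bar>u t x\<bar> \<le> B"
proof -
  obtain B where "\<forall>y\<in>(\<lambda>(t, x). u t x) ` ({0..T} \<times> UNIV). \<bar>y\<bar> \<le> B"
    using assms unfolding cauchy_solution_def bounded_iff by auto
  then show thesis
    by (intro that[of B]) force
qed

lemma cauchy_solution_derivatives:
  assumes "cauchy_solution phi U u" and "t > 0"
  shows "((\<lambda>s. u s x) has_real_derivative deriv (\<lambda>s. u s x) t) (at t)"
    and "(u t has_real_derivative deriv (u t) x) (at x)"
    and "(deriv (u t) has_real_derivative deriv (deriv (u t)) x) (at x)"
    and "deriv (\<lambda>s. u s x) t = deriv (deriv (u t)) x - (u t x)^2 + phi x"
  using assms unfolding cauchy_solution_def DERIV_deriv_iff_real_differentiable by blast+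

lemma cauchy_solution_slice_continuous:
  assumes "cauchy_solution phi U u" and "t > 0"
  shows "continuous_on UNIV (u t)"
  using cauchy_solution_derivatives(2)[OF assms]
  by (intro continuous_at_imp_continuous_on ballI DERIV_isCont)

lemma cauchy_solution_slice_bounded:
  assumes "cauchy_solution phi U u" and "t \<ge> 0"
  shows "bounded (range (u t))"
proof -
  obtain B where "\<And>s x. s \<in> {0..t} \<Longrightarrow> \<bar>u s x\<bar> \<le> B"
    using cauchy_solution_bounded_on_strip[OF assms] by blast
  with \<open>t \<ge> 0\<close> show ?thesis
    unfolding bounded_iff by (intro exI[of _ B]) auto
qed

lemma cauchy_solution_slice_integrable:
  assumes "cauchy_solution phi U u" and "t > 0"
    and "integrable lborel h" and "\<And>x. \<bar>u t x\<bar> \<le> h x"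
  shows "integrable lborel (u t)"
proof -
  have "u t \<in> borel_measurable lborel"
    using cauchy_solution_slice_continuous[OF assms(1,2)] by (simp add: borel_measurable_continuous_onI)
  then show ?thesis
    by (rule Bochner_Integration.integrable_bound[OF assms(3)])
      (rule AE_I2, simp add: order_trans[OF assms(4) abs_ge_self])
qed

lemma equilibrium_derivatives:
  assumes "equilibrium psi f"
  shows "(f has_real_derivative deriv f x) (at x)"
    and "(deriv f has_real_derivative deriv (deriv f) x) (at x)"
    and "deriv (deriv f) x = (f x)^2 - psi x"
  using assms by (auto simp: equilibrium_def C2_fun_def DERIV_deriv_iff_real_differentiable
      algebra_simps dest: spec[of _ x])

lemma equilibrium_continuous:
  assumes "equilibrium psi f"
  shows "continuous_on UNIV f"
  using assms unfolding equilibrium_def C2_fun_def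
  by (intro differentiable_imp_continuous_on) (simp add: differentiable_on_def)

lemma subequilibrium_le_cauchy_solution:
  assumes sol: "cauchy_solution phi U u" and eq: "equilibrium psi f"
    and f_bnd: "bounded (range f)" and psi_le: "\<And>x. psi x \<le> phi x"
    and init: "\<And>x. f x \<le> U x" and t: "t \<ge> 0"
  shows "f x \<le> u t x"
proof -
  obtain B where B: "\<And>s x. s \<in> {0..t} \<Longrightarrow> \<bar>u s x\<bar> \<le> B"
    using cauchy_solution_bounded_on_strip[OF sol t] by blast
  obtain M where M: "\<And>x. \<bar>f x\<bar> \<le> M"
    using f_bnd unfolding bounded_iff by auto
  have "u t x - f x \<ge> 0"
  proof (rule parabolic_min_principle[where w = "\<lambda>s x. u s x - f x"
        and wt = "\<lambda>s x. deriv (\<lambda>s. u s x) s"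
        and wx = "\<lambda>s x. deriv (u s) x - deriv f x"
        and wxx = "\<lambda>s x. deriv (deriv (u s)) x - deriv (deriv f) x"
        and a = "\<lambda>s x. u s x + f x" and B = "B + M" and K = "B + M" and T = t])
    show "continuous_on ({0..t} \<times> UNIV) (\<lambda>p. u (fst p) (snd p) - f (snd p))"
      by (intro continuous_intros cauchy_solution_continuous[OF sol]
          continuous_on_compose2[OF equilibrium_continuous[OF eq]]) auto
    show "\<bar>u s x - f x\<bar> \<le> B + M" if "s \<in> {0..t}" for s x
      using B[OF that, of x] M[of x] by linarith
    show "\<bar>u s x + f x\<bar> \<le> B + M" if "s \<in> {0<..t}" for s x
      using B[of s x] M[of x] that by auto
    show "u 0 x - f x \<ge> 0" for x
      using sol init[of x] by (simp add: cauchy_solution_def)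
    show "((\<lambda>s. u s x - f x) has_real_derivative deriv (\<lambda>s. u s x) s) (at s)"
      "((\<lambda>x. u s x - f x) has_real_derivative deriv (u s) x - deriv f x) (at x)"
      "((\<lambda>x. deriv (u s) x - deriv f x) has_real_derivative
         deriv (deriv (u s)) x - deriv (deriv f) x) (at x)"
      if "s \<in> {0<..t}" for s x
      using that by (auto intro!: derivative_eq_intros cauchy_solution_derivatives[OF sol]
          equilibrium_derivatives[OF eq])
    show "deriv (\<lambda>s. u s x) s \<ge>
          deriv (deriv (u s)) x - deriv (deriv f) x - (u s x + f x) * (u s x - f x)"
      if "s \<in> {0<..t}" for s x
      using that psi_le[of x]
      by (simp add: cauchy_solution_derivatives[OF sol] equilibrium_derivatives[OF eq]
          algebra_simps power2_eq_square)
  qed (use t in auto)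
  then show ?thesis
    by simp
qed

lemma cauchy_solution_le_superequilibrium:
  assumes sol: "cauchy_solution phi U u" and eq: "equilibrium psi f"
    and f_bnd: "bounded (range f)" and phi_le: "\<And>x. phi x \<le> psi x"
    and init: "\<And>x. U x \<le> f x" and t: "t \<ge> 0"
  shows "u t x \<le> f x"
proof -
  obtain B where B: "\<And>s x. s \<in> {0..t} \<Longrightarrow> \<bar>u s x\<bar> \<le> B"
    using cauchy_solution_bounded_on_strip[OF sol t] by blast
  obtain M where M: "\<And>x. \<bar>f x\<bar> \<le> M"
    using f_bnd unfolding bounded_iff by auto
  have "f x - u t x \<ge> 0"
  proof (rule parabolic_min_principle[where w = "\<lambda>s x. f x - u s x"
        and wt = "\<lambda>s x. - deriv (\<lambda>s. u s x) s"
        and wx = "\<lambda>s x. deriv f x - deriv (u s) x"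
        and wxx = "\<lambda>s x. deriv (deriv f) x - deriv (deriv (u s)) x"
        and a = "\<lambda>s x. f x + u s x" and B = "B + M" and K = "B + M" and T = t])
    show "continuous_on ({0..t} \<times> UNIV) (\<lambda>p. f (snd p) - u (fst p) (snd p))"
      by (intro continuous_intros cauchy_solution_continuous[OF sol]
          continuous_on_compose2[OF equilibrium_continuous[OF eq]]) auto
    show "\<bar>f x - u s x\<bar> \<le> B + M" if "s \<in> {0..t}" for s x
      using B[OF that, of x] M[of x] by linarith
    show "\<bar>f x + u s x\<bar> \<le> B + M" if "s \<in> {0<..t}" for s x
      using B[of s x] M[of x] that by auto
    show "f x - u 0 x \<ge> 0" for x
      using sol init[of x] by (simp add: cauchy_solution_def)
    show "((\<lambda>s. f x - u s x) has_real_derivative - deriv (\<lambda>s. u s x) s) (at s)"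
      "((\<lambda>x. f x - u s x) has_real_derivative deriv f x - deriv (u s) x) (at x)"
      "((\<lambda>x. deriv f x - deriv (u s) x) has_real_derivative
         deriv (deriv f) x - deriv (deriv (u s)) x) (at x)"
      if "s \<in> {0<..t}" for s x
      using that by (auto intro!: derivative_eq_intros cauchy_solution_derivatives[OF sol]
          equilibrium_derivatives[OF eq])
    show "- deriv (\<lambda>s. u s x) s \<ge>
          deriv (deriv f) x - deriv (deriv (u s)) x - (f x + u s x) * (f x - u s x)"
      if "s \<in> {0<..t}" for s x
      using that phi_le[of x]
      by (simp add: cauchy_solution_derivatives[OF sol] equilibrium_derivatives[OF eq]
          algebra_simps power2_eq_square)
  qed (use t in auto)
  then show ?thesis
    by simp
qed

lemma bounded_bigo_inverse_square_le:
  fixes f :: "real \<Rightarrow> real"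
  assumes bnd: "bounded (range f)" and bigo: "f \<in> O[at_infinity](\<lambda>x. 1 / x^2)"
  obtains C where "\<And>x. \<bar>f x\<bar> \<le> C / (1 + x^2)"
proof -
  obtain M where M: "\<And>x. \<bar>f x\<bar> \<le> M"
    using bnd unfolding bounded_iff by auto
  obtain k where k: "k > 0" and "eventually (\<lambda>x. \<bar>f x\<bar> \<le> k * \<bar>1 / x^2\<bar>) at_infinity"
    using bigo by (auto elim: landau_o.bigE)
  then obtain b where b: "\<And>x. b \<le> \<bar>x\<bar> \<Longrightarrow> \<bar>f x\<bar> \<le> k / x^2"
    unfolding eventually_at_infinity by auto
  define r where "r = max b 1"
  have "\<bar>f x\<bar> \<le> (2 * k + M * (1 + r^2)) / (1 + x^2)" for x
  proof (cases "r \<le> \<bar>x\<bar>")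
    case True
    then have "1 \<le> x^2"
      using power_mono[of 1 "\<bar>x\<bar>" 2] by (simp add: r_def)
    then have "k * (1 + x^2) \<le> 2 * k * x^2"
      using mult_left_mono[of 1 "x^2" k] k by (simp add: algebra_simps)
    then have "k / x^2 \<le> 2 * k / (1 + x^2)"
      using \<open>1 \<le> x^2\<close> k by (simp add: divide_simps algebra_simps add_pos_nonneg)
    moreover have "0 \<le> M * (1 + r^2) / (1 + x^2)"
      using M[of 0] by (simp add: add_pos_nonneg)
    ultimately show ?thesis
      using b[of x] True by (simp add: r_def add_divide_distrib)
  next
    case False
    then have "x^2 \<le> r^2"
      using power_mono[of "\<bar>x\<bar>" r 2] by simp
    then have "M \<le> M * (1 + r^2) / (1 + x^2)"
      using M[of 0] by (simp add: field_simps mult_left_mono add_pos_nonneg)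
    moreover have "0 \<le> 2 * k / (1 + x^2)"
      using k by (simp add: add_pos_nonneg)
    ultimately show ?thesis
      using M[of x] by (simp add: add_divide_distrib)
  qed
  then show thesis
    by (rule that)
qed

lemma integrable_bounded_bigo_inverse_square:
  fixes f :: "real \<Rightarrow> real"
  assumes "continuous_on UNIV f" and "bounded (range f)" and "f \<in> O[at_infinity](\<lambda>x. 1 / x^2)"
  shows "integrable lborel f"
proof -
  obtain C where C: "\<And>x. \<bar>f x\<bar> \<le> C / (1 + x^2)"
    using bounded_bigo_inverse_square_le[OF assms(2,3)] by blast
  have "integrable lborel (\<lambda>x. C * inverse (1 + x^2))"
    using integrable_inverse_1_plus_square by (simp add: set_integrable_def einterval_def)
  moreover have "f \<in> borel_measurable lborel"
    using assms(1) by (simp add: borel_measurable_continuous_onI)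
  ultimately show ?thesis
    by (rule Bochner_Integration.integrable_bound)
      (auto intro!: order_trans[OF C] simp: divide_inverse)
qed

lemma integrable_asymp_equiv_inverse_square:
  fixes f :: "real \<Rightarrow> real"
  assumes "continuous_on UNIV f" and "bounded (range f)" and "f \<sim>[at_infinity] (\<lambda>x. a / x^2)"
  shows "integrable lborel f"
proof -
  have "(\<lambda>x. a / x^2) \<in> O[at_infinity](\<lambda>x. 1 / x^2)"
    by (intro bigoI[of _ "\<bar>a\<bar>"]) (auto simp: abs_divide)
  then have "f \<in> O[at_infinity](\<lambda>x. 1 / x^2)"
    using landau_o.big.trans[OF asymp_equiv_imp_bigo[OF assms(3)]] by blast
  with assms(1,2) show ?thesis
    by (rule integrable_bounded_bigo_inverse_square)
qed

lemma bounded_range_between: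
  fixes f g h :: "'a \<Rightarrow> real"
  assumes "bounded (range f)" and "bounded (range h)" and "\<And>x. f x \<le> g x" and "\<And>x. g x \<le> h x"
  shows "bounded (range g)"
proof -
  obtain M N where M: "\<And>x. \<bar>f x\<bar> \<le> M" and N: "\<And>x. \<bar>h x\<bar> \<le> N"
    using assms(1,2) unfolding bounded_iff by auto
  have "\<bar>g x\<bar> \<le> M + N" for x
    using M[of x] N[of x] assms(3,4)[of x] by (simp add: abs_le_iff)
  then show ?thesis
    unfolding bounded_iff by auto
qed

theorem mainTheorem3:
  fixes phi fp fm :: "real \<Rightarrow> real"
    and g phic :: "real \<Rightarrow> real \<Rightarrow> real"
    and c :: real and U :: "real \<Rightarrow> real" and u :: "real \<Rightarrow> real \<Rightarrow> real"
  assumes phi_smooth: "smooth_fun phi"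
    and phi_lim: "(phi \<longlongrightarrow> 0) at_infinity"
    and fp_eq: "equilibrium phi fp" and fm_eq: "equilibrium phi fm"
    and fp_reg: "smooth_fun fp" "bounded (range fp)" "bounded (range (deriv fp))"
                "bounded (range (deriv (deriv fp)))"
    and fm_reg: "smooth_fun fm" "bounded (range fm)" "bounded (range (deriv fm))"
                "bounded (range (deriv (deriv fm)))"
    and fp_asym: "fp \<sim>[at_infinity] (\<lambda>x. 6 / x^2)"
    and fm_asym: "fm \<sim>[at_infinity] (\<lambda>x. 6 / x^2)"
    and order: "\<forall>x. fp x > fm x"
    and no_between: "\<not> (\<exists>f2. equilibrium phi f2 \<and> (\<forall>x. fp x > f2 x \<and> f2 x > fm x))"
    and family_eq: "\<forall>c'\<in>{0..<1}. equilibrium (phic c') (g c')"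
    and g0: "g 0 = fm" and phic0: "phic 0 = phi"
    and family_mono: "\<forall>a\<in>{0..<1}. \<forall>b\<in>{0..<1}. a > b \<longrightarrow>
                         (\<forall>x. phic a x < phic b x \<and> g a x > g b x)"
    and c_range: "c \<in> {0..<1}"
    and U_W: "U \<in> {v. C2_fun v \<and> (\<forall>x. g c x < v x \<and> v x < fp x)}"
    and U_reg: "bounded (range (deriv U))" "bounded (range (deriv (deriv U)))"
    and sol: "cauchy_solution phi U u"
  shows "(\<forall>t>0. integrable lborel (u t) \<and> bounded (range (u t)))
         \<and> (c \<in> {0<..<1} \<longrightarrow> \<not> (\<forall>x. ((\<lambda>t. u t x) \<longlongrightarrow> fm x) at_top))"
proof -
  have g_eq: "equilibrium (phic c) (g c)"
    using family_eq c_range by blast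
  have fm_below_g: "fm x < g c x" and phic_below: "phic c x < phi x" if "c > 0" for x
    using family_mono[rule_format, of c 0 x] c_range that g0 phic0 by simp_all
  have fm_le_g: "fm x \<le> g c x" and phic_le: "phic c x \<le> phi x" for x
    using fm_below_g[of x] phic_below[of x] g0 phic0 c_range
    by (cases "c = 0"; simp add: less_imp_le)+
  have g_U: "g c x \<le> U x" and U_fp: "U x \<le> fp x" for x
    using U_W by (simp_all add: less_imp_le)
  have "bounded (range (g c))"
    using bounded_range_between[OF fm_reg(2) fp_reg(2) fm_le_g] g_U U_fp order_trans by blast
  then have sandwich: "g c x \<le> u t x" "u t x \<le> fp x" if "t \<ge> 0" for t x
    using subequilibrium_le_cauchy_solution[OF sol g_eq _ phic_le g_U that]
      cauchy_solution_le_superequilibrium[OF sol fp_eq fp_reg(2) _ U_fp that] by auto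
  have majorant: "integrable lborel (\<lambda>x. \<bar>fp x\<bar> + \<bar>fm x\<bar>)"
    using fp_reg(2) fp_asym fm_reg(2) fm_asym
    by (intro Bochner_Integration.integrable_add integrable_abs integrable_asymp_equiv_inverse_square
        equilibrium_continuous[OF fp_eq] equilibrium_continuous[OF fm_eq])
  show ?thesis
  proof (intro conjI allI impI notI)
    fix t :: real assume "t > 0"
    have "\<bar>u t x\<bar> \<le> \<bar>fp x\<bar> + \<bar>fm x\<bar>" for x
      using sandwich[of t x] fm_le_g[of x] \<open>t > 0\<close> by linarith
    then show "integrable lborel (u t)"
      by (rule cauchy_solution_slice_integrable[OF sol \<open>t > 0\<close> majorant])
    show "bounded (range (u t))"
      using cauchy_solution_slice_bounded[OF sol] \<open>t > 0\<close> by simp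
  next
    assume c: "c \<in> {0<..<1}" and lim: "\<forall>x. ((\<lambda>t. u t x) \<longlongrightarrow> fm x) at_top"
    have "g c 0 \<le> fm 0"
    proof (rule tendsto_lowerbound)
      show "((\<lambda>t. u t 0) \<longlongrightarrow> fm 0) at_top"
        using lim by blast
      show "\<forall>\<^sub>F t in at_top. g c 0 \<le> u t 0"
        using sandwich by (intro eventually_at_top_linorderI[of 0]) blast
    qed simp
    with fm_below_g[of 0] c show False
      by simp
  qed
qed

end
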